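(* Let $\phi_1,\dots,\phi_B\in\mathbb R^d$ with $\|\phi_i\|_2\le1$, and let $\eta>0$ with $\eta B<\frac13$. Let $H:=(I-\eta\phi_1\phi_1^\top)(I-\eta\phi_2\phi_2^\top)\cdots(I-\eta\phi_B\phi_B^\top)$. Then, in the positive semidefinite order, $$I-2\eta\Big(1+\frac{\eta B}{1-2\eta B}\Big)\sum_{i=1}^B\phi_i\phi_i^\top\;\preceq\;H^\top H\;\preceq\;I-2\eta\Big(1-\frac{\eta B}{1-2\eta B}\Big)\sum_{i=1}^B\phi_i\phi_i^\top .$$ *)

theory Defs
  imports "HOL-Analysis.Analysis"
begin

definition outer :: "real^'d \<Rightarrow> real^'d \<Rightarrow> real^'d^'d" where
  "outer u v = (\<chi> i j. u $ i * v $ j)"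

fun mat_prod_upto :: "(nat \<Rightarrow> real^'d^'d) \<Rightarrow> nat \<Rightarrow> real^'d^'d" where
  "mat_prod_upto M 0 = mat 1"
| "mat_prod_upto M (Suc n) = mat_prod_upto M n ** M (Suc n)"

definition loewner_le :: "real^'d^'d \<Rightarrow> real^'d^'d \<Rightarrow> bool" where
  "loewner_le A C \<longleftrightarrow> (\<forall>x. x \<bullet> ((C - A) *v x) \<ge> 0)"

end

theory Submission
  imports Defs
begin

text \<open>Let \<open>H\<^sub>k\<close> be the product of the first k factors and \<open>b\<^sub>k = \<phi>\<^sub>k \<bullet> x\<close>. Telescoping gives
  \<open>H x = x - \<eta> q\<close> with \<open>q = \<Sum>\<^sub>k b\<^sub>k H\<^sub>k\<^sub>-\<^sub>1 \<phi>\<^sub>k\<close>, so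
  \<open>|H x|\<^sup>2 = |x|\<^sup>2 - 2 \<eta> x \<bullet> q + \<eta>\<^sup>2 |q|\<^sup>2\<close>. The errors \<open>e\<^sub>k = b\<^sub>k - x \<bullet> H\<^sub>k\<^sub>-\<^sub>1 \<phi>\<^sub>k\<close> satisfy a
  triangular recursion, hence are uniformly \<open>O(\<eta> |b|\<^sub>1)\<close>, and the first-order part of
  \<open>\<Sum> b\<^sub>k e\<^sub>k\<close> is the off-diagonal half of \<open>|\<Sum> b\<^sub>k \<phi>\<^sub>k|\<^sup>2\<close>. Therefore the defect
  \<open>|H x|\<^sup>2 - |x|\<^sup>2 + 2 \<eta> |b|\<^sub>2\<^sup>2\<close> is \<open>\<eta>\<^sup>2\<close> times a quantity of size \<open>O(|b|\<^sub>1\<^sup>2)\<close>, and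
  \<open>|b|\<^sub>1\<^sup>2 \<le> B |b|\<^sub>2\<^sup>2\<close> turns this into a relative error of order \<open>\<eta> B\<close> in the quadratic form.
  Each factor is a contraction, which bounds \<open>|q|\<close>.\<close>

lemma outer_mult_vec: "outer u v *v x = (v \<bullet> x) *\<^sub>R u"
  by (simp add: outer_def matrix_vector_mult_def inner_vec_def vec_eq_iff sum_distrib_left mult_ac)

lemma sum_matrix_vector_mult: "(\<Sum>i\<in>I. A i) *v (x::real^'n) = (\<Sum>i\<in>I. A i *v x)"
  by (induction I rule: infinite_finite_induct) (auto simp: matrix_vector_mult_add_rdistrib)

lemma inner_transpose_mult_self: "x \<bullet> ((transpose (H::real^'n^'m) ** H) *v x) = (norm (H *v x))\<^sup>2"
  unfolding power2_norm_eq_inner matrix_vector_mul_assoc[symmetric] transpose_matrix_vector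
  by (subst inner_commute) (rule dot_lmul_matrix)

lemma loewner_le_iff: "loewner_le A C \<longleftrightarrow> (\<forall>x. x \<bullet> (A *v x) \<le> x \<bullet> (C *v x))"
  by (simp add: loewner_le_def matrix_vector_mult_diff_rdistrib inner_diff_right)

lemma inner_identity_minus_mult_vec:
  "x \<bullet> ((mat 1 - r *\<^sub>R (A::real^'n^'n)) *v x) = (norm x)\<^sup>2 - r * (x \<bullet> (A *v x))"
  by (simp add: matrix_vector_mult_diff_rdistrib scaleR_matrix_vector_assoc[symmetric]
      inner_diff_right power2_norm_eq_inner)

lemma mat_prod_upto_mult_vec_telescope:
  "mat_prod_upto (\<lambda>k. mat 1 - N k) n *v y
     = y - (\<Sum>k=1..n. mat_prod_upto (\<lambda>k. mat 1 - N k) (k - 1) *v (N k *v y))"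
proof (induction n arbitrary: y)
  case 0
  then show ?case by simp
next
  case (Suc n)
  let ?M = "mat_prod_upto (\<lambda>k. mat 1 - N k)"
  have "?M (Suc n) *v y = ?M n *v (y - N (Suc n) *v y)"
    by (simp add: matrix_vector_mul_assoc[symmetric] matrix_vector_mult_diff_rdistrib)
  also have "\<dots> = ?M n *v y - ?M n *v (N (Suc n) *v y)"
    by (simp add: matrix_vector_mult_diff_distrib)
  finally show ?case
    by (simp add: Suc.IH)
qed

lemma norm_mat_prod_upto_mult_vec_le:
  assumes "\<And>i y. i \<in> {1..n} \<Longrightarrow> norm (M i *v y) \<le> norm y"
  shows "norm (mat_prod_upto M n *v y) \<le> norm y"
  using assms
proof (induction n arbitrary: y)
  case 0
  then show ?case by simp
next
  case (Suc n)
  have "norm (mat_prod_upto M (Suc n) *v y) = norm (mat_prod_upto M n *v (M (Suc n) *v y))"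
    by (simp add: matrix_vector_mul_assoc)
  also have "\<dots> \<le> norm (M (Suc n) *v y)"
    using Suc.prems by (intro Suc.IH) auto
  also have "\<dots> \<le> norm y"
    using Suc.prems by auto
  finally show ?case .
qed

lemma rank_one_update_mult_vec:
  "(mat 1 - \<eta> *\<^sub>R outer v v) *v y = y - (\<eta> * (v \<bullet> y)) *\<^sub>R v"
  by (simp add: matrix_vector_mult_diff_rdistrib scaleR_matrix_vector_assoc[symmetric] outer_mult_vec)

lemma norm_rank_one_update_mult_vec_le:
  assumes "0 \<le> \<eta>" "\<eta> * (norm v)\<^sup>2 \<le> 2"
  shows "norm ((mat 1 - \<eta> *\<^sub>R outer v v) *v y) \<le> norm y"
proof -
  have "(norm ((mat 1 - \<eta> *\<^sub>R outer v v) *v y))\<^sup>2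
      = (norm y)\<^sup>2 - \<eta> * (v \<bullet> y)\<^sup>2 * (2 - \<eta> * (norm v)\<^sup>2)"
    unfolding rank_one_update_mult_vec power2_norm_eq_inner
    by (simp add: inner_diff_left inner_diff_right inner_commute algebra_simps power2_eq_square)
  also have "\<dots> \<le> (norm y)\<^sup>2"
    using assms by simp
  finally show ?thesis
    by (rule power2_le_imp_le) simp
qed

lemma norm_sum_squared_eq:
  fixes v :: "nat \<Rightarrow> 'a::real_inner"
  shows "(norm (\<Sum>k=1..n. v k))\<^sup>2
     = 2 * (\<Sum>k=1..n. v k \<bullet> (\<Sum>i=1..k-1. v i)) + (\<Sum>k=1..n. (norm (v k))\<^sup>2)"
proof (induction n)
  case 0
  then show ?case by simp
next
  case (Suc n)
  have "(norm (\<Sum>k=1..Suc n. v k))\<^sup>2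
      = (norm (\<Sum>k=1..n. v k))\<^sup>2 + 2 * (v (Suc n) \<bullet> (\<Sum>k=1..n. v k)) + (norm (v (Suc n)))\<^sup>2"
    by (simp add: power2_norm_eq_inner inner_add_left inner_add_right inner_commute)
  then show ?case
    using Suc.IH by simp
qed

lemma square_sum_abs_le:
  fixes f :: "'a \<Rightarrow> real"
  shows "(\<Sum>k\<in>I. \<bar>f k\<bar>)\<^sup>2 \<le> real (card I) * (\<Sum>k\<in>I. (f k)\<^sup>2)"
  using Cauchy_Schwarz_ineq_sum[of "\<lambda>_. 1" "\<lambda>k. \<bar>f k\<bar>" I] by simp

locale small_step_product =
  fixes \<phi> :: "nat \<Rightarrow> real^'d" and \<eta> :: real and B :: nat and x :: "real^'d"
  assumes norm_le_one: "\<And>i. i \<in> {1..B} \<Longrightarrow> norm (\<phi> i) \<le> 1"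
    and eta_pos: "0 < \<eta>" and step_small: "\<eta> * real B < 1/3" and B_pos: "1 \<le> B"
begin

definition t :: real where "t = \<eta> * real B"

definition P :: "nat \<Rightarrow> real^'d^'d" where
  "P = mat_prod_upto (\<lambda>i. mat 1 - \<eta> *\<^sub>R outer (\<phi> i) (\<phi> i))"

definition b :: "nat \<Rightarrow> real" where "b k = \<phi> k \<bullet> x"

definition u :: "nat \<Rightarrow> real^'d" where "u k = P (k - 1) *v \<phi> k"

definition e :: "nat \<Rightarrow> real" where "e k = b k - x \<bullet> u k"

definition l1 :: real where "l1 = (\<Sum>k=1..B. \<bar>b k\<bar>)"

definition s :: real where "s = (\<Sum>k=1..B. (b k)\<^sup>2)"

text \<open>\<open>E\<close> solves \<open>E = \<eta> (l1 + B E)\<close>, the bound propagated by the recursion \<open>e_eq\<close>.\<close>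

definition E :: real where "E = \<eta> * l1 / (1 - t)"

definition q :: "real^'d" where "q = (\<Sum>k=1..B. b k *\<^sub>R u k)"

definition w :: "real^'d" where "w = (\<Sum>k=1..B. b k *\<^sub>R \<phi> k)"

definition diag :: real where "diag = (\<Sum>k=1..B. (b k)\<^sup>2 * (norm (\<phi> k))\<^sup>2)"

definition R :: real where "R = (\<Sum>k=1..B. b k * (\<Sum>i=1..k-1. (\<phi> i \<bullet> \<phi> k) * e i))"

definition defect :: real where "defect = (norm (P B *v x))\<^sup>2 - (norm x)\<^sup>2 + 2 * \<eta> * s"

lemma t_bounds: "0 < t" "t < 1/3" "\<eta> \<le> t"
  using eta_pos step_small B_pos by (auto simp: t_def)

lemma E_nonneg: "0 \<le> E"
  using eta_pos t_bounds by (simp add: E_def l1_def sum_nonneg)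

lemma abs_inner_le_one: "i \<in> {1..B} \<Longrightarrow> k \<in> {1..B} \<Longrightarrow> \<bar>\<phi> i \<bullet> \<phi> k\<bar> \<le> 1"
  using Cauchy_Schwarz_ineq2[of "\<phi> i" "\<phi> k"] norm_le_one[of i] norm_le_one[of k]
  by (smt (verit) mult_le_one norm_ge_zero)

lemma P_mult_vec: "P n *v y = y - \<eta> *\<^sub>R (\<Sum>k=1..n. (\<phi> k \<bullet> y) *\<^sub>R u k)"
  using mat_prod_upto_mult_vec_telescope[of "\<lambda>k. \<eta> *\<^sub>R outer (\<phi> k) (\<phi> k)" n y]
  by (simp add: P_def u_def scaleR_matrix_vector_assoc[symmetric] outer_mult_vec
      matrix_scaleR_vector_ac scaleR_sum_right inner_commute)

lemma e_eq: "e k = \<eta> * (\<Sum>i=1..k-1. (\<phi> i \<bullet> \<phi> k) * (x \<bullet> u i))"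
  using P_mult_vec[of "k - 1" "\<phi> k"]
  by (simp add: e_def u_def[of k] b_def inner_diff_right inner_sum_right inner_commute)

lemma abs_e_le: "k \<le> B \<Longrightarrow> \<bar>e k\<bar> \<le> E"
proof (induction k rule: less_induct)
  case (less k)
  have "\<bar>\<Sum>i=1..k-1. (\<phi> i \<bullet> \<phi> k) * (x \<bullet> u i)\<bar> \<le> (\<Sum>i=1..k-1. \<bar>b i\<bar> + E)"
  proof (rule order_trans[OF sum_abs sum_mono])
    fix i assume i: "i \<in> {1..k-1}"
    have "\<bar>(\<phi> i \<bullet> \<phi> k) * (x \<bullet> u i)\<bar> \<le> 1 * \<bar>x \<bullet> u i\<bar>"
      unfolding abs_mult using abs_inner_le_one[of i k] i less.prems by (intro mult_right_mono) auto
    also have "\<dots> \<le> \<bar>b i\<bar> + \<bar>e i\<bar>"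
      by (simp add: e_def)
    also have "\<bar>e i\<bar> \<le> E"
      using less.IH[of i] i less.prems by auto
    finally show "\<bar>(\<phi> i \<bullet> \<phi> k) * (x \<bullet> u i)\<bar> \<le> \<bar>b i\<bar> + E" by simp
  qed
  also have "\<dots> \<le> l1 + real B * E"
  proof -
    have "(\<Sum>i=1..k-1. \<bar>b i\<bar>) \<le> l1"
      unfolding l1_def using less.prems by (intro sum_mono2) auto
    moreover have "(\<Sum>i=1..k-1. E) \<le> real B * E"
      using less.prems E_nonneg by (simp add: mult_right_mono)
    ultimately show ?thesis by (simp add: sum.distrib)
  qed
  finally have "\<bar>e k\<bar> \<le> \<eta> * (l1 + real B * E)"
    using eta_pos by (simp add: e_eq abs_mult mult_left_mono)
  also have "\<eta> * (l1 + real B * E) = E"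
    using t_bounds unfolding E_def t_def by (simp add: field_simps)
  finally show ?case .
qed

lemma norm_q_le: "norm q \<le> l1"
  unfolding q_def l1_def
proof (rule order_trans[OF norm_sum sum_mono])
  fix k assume k: "k \<in> {1..B}"
  have "norm (u k) \<le> norm (\<phi> k)"
    unfolding u_def P_def
  proof (rule norm_mat_prod_upto_mult_vec_le)
    fix i y assume "i \<in> {1..k - 1}"
    then have "(norm (\<phi> i))\<^sup>2 \<le> 1"
      using k norm_le_one[of i] by (auto simp: power_le_one_iff)
    then have "\<eta> * (norm (\<phi> i))\<^sup>2 \<le> 1 * 1"
      using eta_pos t_bounds by (intro mult_mono) auto
    then show "norm ((mat 1 - \<eta> *\<^sub>R outer (\<phi> i) (\<phi> i)) *v y) \<le> norm y"
      using eta_pos by (intro norm_rank_one_update_mult_vec_le) auto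
  qed
  with norm_le_one[OF k] show "norm (b k *\<^sub>R u k) \<le> \<bar>b k\<bar>"
    by (simp add: mult_left_le)
qed

lemma norm_w_le: "norm w \<le> l1"
  unfolding w_def l1_def
  by (rule order_trans[OF norm_sum sum_mono]) (simp add: norm_le_one mult_left_le)

lemma diag_bounds: "0 \<le> diag" "diag \<le> s"
  unfolding diag_def s_def
  by (auto intro!: sum_nonneg sum_mono mult_left_le simp: norm_le_one power_le_one)

lemma l1_squared_le: "l1\<^sup>2 \<le> real B * s"
  using square_sum_abs_le[of b "{1..B}"] by (simp add: l1_def s_def)

lemma abs_R_le: "\<bar>R\<bar> \<le> t * l1\<^sup>2 / (1 - t)"
proof -
  have "\<bar>R\<bar> \<le> (\<Sum>k=1..B. \<bar>b k\<bar> * (real B * E))"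
    unfolding R_def
  proof (rule order_trans[OF sum_abs sum_mono])
    fix k assume k: "k \<in> {1..B}"
    have "\<bar>\<Sum>i=1..k-1. (\<phi> i \<bullet> \<phi> k) * e i\<bar> \<le> (\<Sum>i=1..k-1. E)"
    proof (rule order_trans[OF sum_abs sum_mono])
      fix i assume "i \<in> {1..k-1}"
      then have "\<bar>(\<phi> i \<bullet> \<phi> k) * e i\<bar> \<le> 1 * E"
        unfolding abs_mult using k abs_inner_le_one[of i k] abs_e_le[of i] by (intro mult_mono) auto
      then show "\<bar>(\<phi> i \<bullet> \<phi> k) * e i\<bar> \<le> E" by simp
    qed
    also have "\<dots> \<le> real B * E"
      using k E_nonneg by (simp add: mult_right_mono)
    finally show "\<bar>b k * (\<Sum>i=1..k-1. (\<phi> i \<bullet> \<phi> k) * e i)\<bar> \<le> \<bar>b k\<bar> * (real B * E)"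
      by (simp add: abs_mult mult_left_mono)
  qed
  also have "\<dots> = l1 * (real B * E)"
    by (simp add: l1_def sum_distrib_right)
  also have "\<dots> = t * l1\<^sup>2 / (1 - t)"
    by (simp add: E_def t_def power2_eq_square)
  finally show ?thesis .
qed

lemma norm_w_squared: "(norm w)\<^sup>2 = 2 * (\<Sum>k=1..B. b k * (\<Sum>i=1..k-1. (\<phi> i \<bullet> \<phi> k) * b i)) + diag"
  using norm_sum_squared_eq[of "\<lambda>k. b k *\<^sub>R \<phi> k" B]
  by (simp add: w_def diag_def inner_sum_right inner_commute mult_ac power_mult_distrib sum_distrib_left)

lemma sum_b_mult_e: "(\<Sum>k=1..B. b k * e k) = \<eta> * ((norm w)\<^sup>2 - diag) / 2 - \<eta> * R"
proof -
  have "x \<bullet> u i = b i - e i" for i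
    by (simp add: e_def)
  then have "b k * e k = \<eta> * (b k * (\<Sum>i=1..k-1. (\<phi> i \<bullet> \<phi> k) * b i))
      - \<eta> * (b k * (\<Sum>i=1..k-1. (\<phi> i \<bullet> \<phi> k) * e i))" for k
    by (simp add: e_eq[of k] right_diff_distrib sum_subtractf)
  then have "(\<Sum>k=1..B. b k * e k)
      = \<eta> * (\<Sum>k=1..B. b k * (\<Sum>i=1..k-1. (\<phi> i \<bullet> \<phi> k) * b i)) - \<eta> * R"
    by (simp add: R_def sum_subtractf sum_distrib_left)
  then show ?thesis
    by (simp add: norm_w_squared)
qed

lemma P_B_mult_vec: "P B *v x = x - \<eta> *\<^sub>R q"
  by (simp add: P_mult_vec q_def b_def inner_commute)

lemma defect_eq: "defect = \<eta>\<^sup>2 * ((norm w)\<^sup>2 - diag - 2 * R + (norm q)\<^sup>2)"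
proof -
  have "x \<bullet> q = s - (\<Sum>k=1..B. b k * e k)"
    by (simp add: q_def s_def inner_sum_right e_def power2_eq_square algebra_simps sum_subtractf)
  then have xq: "x \<bullet> q = s - \<eta> * ((norm w)\<^sup>2 - diag) / 2 + \<eta> * R"
    using sum_b_mult_e by linarith
  have "(norm (P B *v x))\<^sup>2 = (norm x)\<^sup>2 - 2 * \<eta> * (x \<bullet> q) + \<eta>\<^sup>2 * (norm q)\<^sup>2"
    unfolding P_B_mult_vec power2_norm_eq_inner
    by (simp add: inner_diff_left inner_diff_right inner_commute algebra_simps power2_eq_square)
  then show ?thesis
    unfolding defect_def xq by (simp add: field_simps power2_eq_square)
qed

lemma defect_le: "defect \<le> 2 * \<eta> * t * s / (1 - t)"
proof -
  have "(norm w)\<^sup>2 \<le> l1\<^sup>2" "(norm q)\<^sup>2 \<le> l1\<^sup>2"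
    using norm_w_le norm_q_le by (auto intro: power_mono)
  then have "(norm w)\<^sup>2 - diag - 2 * R + (norm q)\<^sup>2 \<le> l1\<^sup>2 + 2 * (t * l1\<^sup>2 / (1 - t)) + l1\<^sup>2"
    using diag_bounds abs_R_le by linarith
  also have "\<dots> = 2 * l1\<^sup>2 / (1 - t)"
    using t_bounds by (simp add: field_simps)
  also have "\<dots> \<le> 2 * (real B * s) / (1 - t)"
    using l1_squared_le t_bounds by (simp add: divide_right_mono)
  finally have "defect \<le> \<eta>\<^sup>2 * (2 * (real B * s) / (1 - t))"
    unfolding defect_eq by (rule mult_left_mono) simp
  then show ?thesis
    by (simp add: t_def power2_eq_square mult_ac)
qed

lemma defect_ge: "- (\<eta> * t * s * (1 + t) / (1 - t)) \<le> defect"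
proof -
  have s_nonneg: "0 \<le> s"
    by (simp add: s_def sum_nonneg)
  have "t * l1\<^sup>2 / (1 - t) \<le> t * (real B * s) / (1 - t)"
    using l1_squared_le t_bounds by (simp add: divide_right_mono)
  then have "- s - 2 * (t * (real B * s) / (1 - t)) \<le> (norm w)\<^sup>2 - diag - 2 * R + (norm q)\<^sup>2"
    using diag_bounds abs_R_le by (smt (verit) zero_le_power2)
  then have "\<eta>\<^sup>2 * (- s - 2 * (t * (real B * s) / (1 - t))) \<le> defect"
    unfolding defect_eq by (simp add: mult_left_mono)
  moreover have "\<eta>\<^sup>2 * (- s - 2 * (t * (real B * s) / (1 - t))) = - (\<eta>\<^sup>2 * s) - 2 * \<eta> * t * t * s / (1 - t)"
    by (simp add: t_def power2_eq_square field_simps)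
  moreover have "\<eta>\<^sup>2 * s \<le> \<eta> * t * s"
    using t_bounds eta_pos s_nonneg by (simp add: power2_eq_square mult_right_mono)
  moreover have "\<eta> * t * s + 2 * \<eta> * t * t * s / (1 - t) = \<eta> * t * s * (1 + t) / (1 - t)"
    using t_bounds by (simp add: field_simps)
  ultimately show ?thesis
    by linarith
qed

lemma abs_defect_le: "\<bar>defect\<bar> \<le> 2 * \<eta> * (t / (1 - 2 * t)) * s"
proof -
  have ts_nonneg: "0 \<le> \<eta> * t * s"
    using eta_pos t_bounds by (simp add: s_def sum_nonneg)
  have "2 / (1 - t) \<le> 2 / (1 - 2 * t)"
    using t_bounds by (simp add: field_simps)
  then have upper: "\<eta> * t * s * (2 / (1 - t)) \<le> \<eta> * t * s * (2 / (1 - 2 * t))"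
    by (rule mult_left_mono[OF _ ts_nonneg])
  have "t \<le> 1 + 2 * (t * t)"
    using t_bounds zero_le_square[of t] by linarith
  then have "(1 + t) / (1 - t) \<le> 2 / (1 - 2 * t)"
    using t_bounds by (simp add: field_simps)
  then have lower: "\<eta> * t * s * ((1 + t) / (1 - t)) \<le> \<eta> * t * s * (2 / (1 - 2 * t))"
    by (rule mult_left_mono[OF _ ts_nonneg])
  show ?thesis
    using defect_le defect_ge upper lower by (simp add: abs_le_iff field_simps)
qed

lemma quadratic_defect_bound:
  "\<bar>(norm (mat_prod_upto (\<lambda>i. mat 1 - \<eta> *\<^sub>R outer (\<phi> i) (\<phi> i)) B *v x))\<^sup>2 - (norm x)\<^sup>2
      + 2 * \<eta> * (\<Sum>k=1..B. (\<phi> k \<bullet> x)\<^sup>2)\<bar>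
   \<le> 2 * \<eta> * (\<eta> * real B / (1 - 2 * \<eta> * real B)) * (\<Sum>k=1..B. (\<phi> k \<bullet> x)\<^sup>2)"
  using abs_defect_le by (simp add: defect_def P_def s_def b_def t_def mult.assoc)

end

theorem mainTheorem4:
  fixes \<phi> :: "nat \<Rightarrow> real^'d" and \<eta> :: real and B :: nat
  assumes "\<And>i. i \<in> {1..B} \<Longrightarrow> norm (\<phi> i) \<le> 1"
    and "\<eta> > 0" and "\<eta> * real B < 1/3"
  defines "H \<equiv> mat_prod_upto (\<lambda>i. mat 1 - \<eta> *\<^sub>R outer (\<phi> i) (\<phi> i)) B"
    and "S \<equiv> (\<Sum>i=1..B. outer (\<phi> i) (\<phi> i))"
  shows "loewner_le (mat 1 - (2 * \<eta> * (1 + \<eta> * real B / (1 - 2 * \<eta> * real B))) *\<^sub>R S)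
                    (transpose H ** H)
       \<and> loewner_le (transpose H ** H)
                    (mat 1 - (2 * \<eta> * (1 - \<eta> * real B / (1 - 2 * \<eta> * real B))) *\<^sub>R S)"
proof (cases "B = 0")
  case True
  then show ?thesis
    by (simp add: H_def S_def loewner_le_def)
next
  case False
  define c where "c = \<eta> * real B / (1 - 2 * \<eta> * real B)"
  have quadratic_S: "x \<bullet> (S *v x) = (\<Sum>k=1..B. (\<phi> k \<bullet> x)\<^sup>2)" for x
    unfolding S_def sum_matrix_vector_mult outer_mult_vec
    by (simp add: inner_sum_right power2_eq_square inner_commute)
  have "\<bar>x \<bullet> ((transpose H ** H) *v x) - (norm x)\<^sup>2 + 2 * \<eta> * (x \<bullet> (S *v x))\<bar>
      \<le> 2 * \<eta> * c * (x \<bullet> (S *v x))" for x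
  proof -
    interpret small_step_product \<phi> \<eta> B x
      using assms False by unfold_locales auto
    show ?thesis
      using quadratic_defect_bound
      unfolding inner_transpose_mult_self quadratic_S H_def c_def .
  qed
  then show ?thesis
    unfolding loewner_le_iff inner_identity_minus_mult_vec c_def[symmetric]
    by (auto simp: abs_le_iff algebra_simps)
qed

end
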